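(* Let $K$ be a field, $R=K[A,X]=K[a_1,\dots,a_{N_A},x_1,\dots,x_{N_X}]$, $\tau$ an $X$-elimination term-ordering on $R$, and $I$ an ideal of $R$. Throughout the execution of the algorithm CGS-Iter (described in the context) on input $I$, whenever an ideal $\mathfrak b\subseteq K[A]$ is added to the set VanishingToDo: (1) $\mathfrak b\not\supseteq\mathfrak z$ for every ideal $\mathfrak z$ in the current VanishingToDo; (2) $\mathfrak b\not\subseteq\mathfrak z$ for every ideal $\mathfrak z$ that has ever been listed in VanishingToDo; (3) VanishingToDo is minimalized, i.e. no ideal in it contains another ideal in it.
   Context: Notation. $K$ is a field with algebraic closure $\bar K$; $A=\{a_1,\dots,a_{N_A}\}$ are parameters and $X=\{x_1,\dots,x_{N_X}\}$ indeterminates. For an ideal $\mathfrak a\subseteq K[A]$, $\mathbb V(\mathfrak a)\subseteq\bar K^{N_A}$ denotes its zero set; ideals of $K[A]$ are regarded as their extensions in $K[A,X]$ when added to ideals of $K[A,X]$. A term-ordering $\tau$ on power-products of $K[A,X]$ is an $X$-elimination ordering if every power-product involving only the $a_i$ is smaller than every power-product involving some $x_j$; $\tau_X$ is its restriction to power-products in $X$. Viewing $f\in K[A,X]$ as an element of $K[A][X]$, $\mathrm{LPP}_X(f)\in K[X]$ is its $\tau_X$-greatest power-product in $X$ and $\mathrm{LC}_X(f)\in K[A]$ its coefficient. For finite $F\subseteq K[A,X]$, $\mathrm{MB}(F)$ is the minimal set of monomial generators of $\langle\mathrm{LPP}_X(f)\mid f\in F\rangle\subseteq K[X]$. "Minimalized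 $S$", for a finite set $S$ of ideals, denotes the set of inclusion-minimal members of $S$ (one copy of each). Algorithm CGS-Iter. Input: ideal $I\subseteq R$. 1. VanishingToDo $:=\{\langle0\rangle\}$ (set of ideals of $K[A]$); FinalCases $:=\emptyset$. 2. While VanishingToDo $\neq\emptyset$: 2.1 choose (arbitrarily) and remove one ideal $\mathfrak a$ from VanishingToDo; 2.2 $J:=I+\mathfrak a$; 2.3 compute a $\tau$-Gröbner basis $G$ of $J$; 2.4 $\mathfrak g:=J\cap K[A]$; 2.5 if $\mathbb V(\mathfrak a)\setminus\mathbb V(\mathfrak g)\neq\emptyset$: 2.5.1 append $(\mathbb V(\mathfrak a)\setminus\mathbb V(\mathfrak g),\{1\})$ to FinalCases; 2.5.2 if $\mathfrak g$ contains no ideal currently in VanishingToDo, append $\mathfrak g$ to VanishingToDo; 2.6 otherwise: 2.6.1 $M:=\mathrm{MB}(G\setminus K[A])$; 2.6.2 $G_M:=\{g\in G\mid\mathrm{LPP}_X(g)\in M\}$; 2.6.3 for each $t\in M$, $\mathfrak c_t:=\langle\mathrm{LC}_X(g)\mid g\in G,\ \mathrm{LPP}_X(g)=t\rangle\subseteq K[A]$; 2.6.4 append $\big(\mathbb V(\mathfrak g)\setminus\bigcup_{t\in M}\mathbb V(\mathfrak c_t),\ G_M\big)$ to FinalCases; 2.6.5 NewVanishing $:=$ minimalized $\{\mathfrak c_t+\mathfrak g\mid t\in M,\ \mathfrak c_t\not\subseteq\mathfrak g\}$; 2.6.6 for each $\mathfrak b$ in NewVanishing: if $\mathfrak b$ contains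 no ideal currently in VanishingToDo, append $\mathfrak b$ to VanishingToDo. Output: FinalCases. *)

theory Defs
  imports "HOL-Library.Poly_Mapping" "HOL-Library.Product_Plus"
          "HOL-Computational_Algebra.Polynomial"
begin

text \<open>Power-products of K[A,X]: pairs (exponents of the parameters a_i, exponents
  of the indeterminates x_j); the parameters are indexed by a finite type 'a,
  the indeterminates by a finite type 'x.\<close>

type_synonym ('a,'x) pp = "('a \<Rightarrow>\<^sub>0 nat) \<times> ('x \<Rightarrow>\<^sub>0 nat)"
type_synonym ('a,'x,'k) mpoly = "('a,'x) pp \<Rightarrow>\<^sub>0 'k"

definition pp_dvd :: "('a,'x) pp \<Rightarrow> ('a,'x) pp \<Rightarrow> bool" where
  "pp_dvd s t \<longleftrightarrow> (\<forall>v. Poly_Mapping.lookup (fst s) v \<le> Poly_Mapping.lookup (fst t) v) \<and> (\<forall>w. Poly_Mapping.lookup (snd s) w \<le> Poly_Mapping.lookup (snd t) w)"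

definition xpp_dvd :: "('x \<Rightarrow>\<^sub>0 nat) \<Rightarrow> ('x \<Rightarrow>\<^sub>0 nat) \<Rightarrow> bool" where
  "xpp_dvd s t \<longleftrightarrow> (\<forall>v. Poly_Mapping.lookup s v \<le> Poly_Mapping.lookup t v)"

definition term_order :: "(('a,'x) pp \<Rightarrow> ('a,'x) pp \<Rightarrow> bool) \<Rightarrow> bool" where
  "term_order ord \<longleftrightarrow>
     (\<forall>s. ord s s) \<and> (\<forall>s t. ord s t \<and> ord t s \<longrightarrow> s = t) \<and>
     (\<forall>s t u. ord s t \<and> ord t u \<longrightarrow> ord s u) \<and> (\<forall>s t. ord s t \<or> ord t s) \<and>
     (\<forall>t. ord 0 t) \<and> (\<forall>s t u. ord s t \<longrightarrow> ord (s + u) (t + u))"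

definition x_elim :: "(('a,'x) pp \<Rightarrow> ('a,'x) pp \<Rightarrow> bool) \<Rightarrow> bool" where
  "x_elim ord \<longleftrightarrow> (\<forall>s t. snd s = 0 \<and> snd t \<noteq> 0 \<longrightarrow> ord s t \<and> s \<noteq> t)"

text \<open>Leading power-product w.r.t. tau (for nonzero f).\<close>
definition lpp :: "(('a,'x) pp \<Rightarrow> ('a,'x) pp \<Rightarrow> bool) \<Rightarrow> ('a,'x,'k::zero) mpoly \<Rightarrow> ('a,'x) pp" where
  "lpp ord f = (THE t. t \<in> Poly_Mapping.keys f \<and> (\<forall>s\<in>Poly_Mapping.keys f. ord s t))"

text \<open>LPP_X: the tau_X-greatest power-product in X of f viewed in K[A][X].\<close>
definition lpp_X :: "(('a,'x) pp \<Rightarrow> ('a,'x) pp \<Rightarrow> bool) \<Rightarrow> ('a,'x,'k::zero) mpoly \<Rightarrow> ('x \<Rightarrow>\<^sub>0 nat)" where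
  "lpp_X ord f = (THE t. t \<in> snd ` Poly_Mapping.keys f \<and> (\<forall>s\<in>snd ` Poly_Mapping.keys f. ord (0, s) (0, t)))"

text \<open>LC_X: the coefficient (in K[A]) of LPP_X(f).\<close>
definition lc_X :: "(('a,'x) pp \<Rightarrow> ('a,'x) pp \<Rightarrow> bool) \<Rightarrow> ('a,'x,'k::comm_monoid_add) mpoly \<Rightarrow> ('a,'x,'k) mpoly" where
  "lc_X ord f = (\<Sum>m\<in>{m\<in>Poly_Mapping.keys f. snd m = lpp_X ord f}. Poly_Mapping.single (fst m, 0) (Poly_Mapping.lookup f m))"

definition MB :: "(('a,'x) pp \<Rightarrow> ('a,'x) pp \<Rightarrow> bool) \<Rightarrow> ('a,'x,'k::zero) mpoly set \<Rightarrow> ('x \<Rightarrow>\<^sub>0 nat) set" where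
  "MB ord F = {t \<in> lpp_X ord ` F. \<not> (\<exists>s \<in> lpp_X ord ` F. s \<noteq> t \<and> xpp_dvd s t)}"

definition KA :: "('a,'x,'k::zero) mpoly set" where
  "KA = {f. \<forall>m\<in>Poly_Mapping.keys f. snd m = 0}"

definition is_ideal :: "('a,'x,'k::comm_ring_1) mpoly set \<Rightarrow> bool" where
  "is_ideal J \<longleftrightarrow> 0 \<in> J \<and> (\<forall>f\<in>J. \<forall>g\<in>J. f + g \<in> J) \<and> (\<forall>r. \<forall>f\<in>J. r * f \<in> J)"

definition is_ideal_A :: "('a,'x,'k::comm_ring_1) mpoly set \<Rightarrow> bool" where
  "is_ideal_A J \<longleftrightarrow> J \<subseteq> KA \<and> 0 \<in> J \<and> (\<forall>f\<in>J. \<forall>g\<in>J. f + g \<in> J) \<and> (\<forall>r\<in>KA. \<forall>f\<in>J. r * f \<in> J)"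

definition ideal_gen :: "('a,'x,'k::comm_ring_1) mpoly set \<Rightarrow> ('a,'x,'k) mpoly set" where
  "ideal_gen S = \<Inter> {J. is_ideal J \<and> S \<subseteq> J}"

definition ideal_gen_A :: "('a,'x,'k::comm_ring_1) mpoly set \<Rightarrow> ('a,'x,'k) mpoly set" where
  "ideal_gen_A S = \<Inter> {J. is_ideal_A J \<and> S \<subseteq> J}"

definition is_GB :: "(('a,'x) pp \<Rightarrow> ('a,'x) pp \<Rightarrow> bool) \<Rightarrow> ('a,'x,'k::comm_ring_1) mpoly set \<Rightarrow> ('a,'x,'k) mpoly set \<Rightarrow> bool" where
  "is_GB ord G J \<longleftrightarrow> finite G \<and> G \<subseteq> J \<and>
     (\<forall>f\<in>J. f \<noteq> 0 \<longrightarrow> (\<exists>g\<in>G. g \<noteq> 0 \<and> pp_dvd (lpp ord g) (lpp ord f)))"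

text \<open>Evaluation of an element of K[A] at a point of Kbar^{N_A} (emb: K -> Kbar).\<close>
definition evalA :: "('k \<Rightarrow> 'l::comm_ring_1) \<Rightarrow> ('a \<Rightarrow> 'l) \<Rightarrow> ('a,'x,'k::zero) mpoly \<Rightarrow> 'l" where
  "evalA emb p f = (\<Sum>m\<in>Poly_Mapping.keys f. emb (Poly_Mapping.lookup f m) * (\<Prod>v\<in>Poly_Mapping.keys (fst m). p v ^ Poly_Mapping.lookup (fst m) v))"

definition zeroset :: "('k \<Rightarrow> 'l::comm_ring_1) \<Rightarrow> ('a,'x,'k::zero) mpoly set \<Rightarrow> ('a \<Rightarrow> 'l) set" where
  "zeroset emb S = {p. \<forall>f\<in>S. evalA emb p f = 0}"

definition minimalized :: "'b set set \<Rightarrow> 'b set set" where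
  "minimalized S = {b\<in>S. \<not> (\<exists>c\<in>S. c \<subset> b)}"

text \<open>Small-step semantics of CGS-Iter (FinalCases omitted, it does not influence
  the control flow).  State: (VanishingToDo, all ideals ever listed in
  VanishingToDo, ideals still to be considered for appending in the current
  iteration, in the (arbitrary) order in which they are considered).\<close>
type_synonym ('a,'x,'k) cgs_state =
  "('a,'x,'k) mpoly set set \<times> ('a,'x,'k) mpoly set set \<times> ('a,'x,'k) mpoly set list"

inductive cgs_step ::
  "('a,'x,'k::field) mpoly set \<Rightarrow> (('a,'x) pp \<Rightarrow> ('a,'x) pp \<Rightarrow> bool) \<Rightarrow> ('k \<Rightarrow> 'l::field)
   \<Rightarrow> ('a,'x,'k) cgs_state \<Rightarrow> ('a,'x,'k) cgs_state \<Rightarrow> bool"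
  for I ord emb where
  select_nonempty:
    "\<lbrakk> a \<in> todo; is_GB ord G (ideal_gen (I \<union> a));
       g = ideal_gen (I \<union> a) \<inter> KA;
       zeroset emb a - zeroset emb g \<noteq> {} \<rbrakk>
     \<Longrightarrow> cgs_step I ord emb (todo, hist, []) (todo - {a}, hist, [g])"
| select_empty:
    "\<lbrakk> a \<in> todo; is_GB ord G (ideal_gen (I \<union> a));
       g = ideal_gen (I \<union> a) \<inter> KA;
       zeroset emb a - zeroset emb g = {};
       M = MB ord (G - KA);
       \<And>t. c t = ideal_gen_A {lc_X ord h | h. h \<in> G \<and> lpp_X ord h = t};
       set bs = minimalized {ideal_gen_A (c t \<union> g) | t. t \<in> M \<and> \<not> c t \<subseteq> g};
       distinct bs \<rbrakk>
     \<Longrightarrow> cgs_step I ord emb (todo, hist, []) (todo - {a}, hist, bs)"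
| append:
    "\<not> (\<exists>z\<in>todo. z \<subseteq> b)
     \<Longrightarrow> cgs_step I ord emb (todo, hist, b # bs) (insert b todo, insert b hist, bs)"
| skip:
    "(\<exists>z\<in>todo. z \<subseteq> b)
     \<Longrightarrow> cgs_step I ord emb (todo, hist, b # bs) (todo, hist, bs)"

definition cgs_init :: "('a,'x,'k::zero) cgs_state" where
  "cgs_init = ({{0}}, {{0}}, [])"

end

theory Submission
  imports Defs
begin

text \<open>All three claims follow from an invariant of the run: every ideal in VanishingToDo
  is maximal among the ideals ever listed, and no ideal waiting to be appended is contained
  in an ideal ever listed.  The latter survives a selection step because every new candidate
  \<open>b\<close> strictly contains the selected ideal \<open>a\<close>: we have \<open>a \<subseteq> g \<subseteq> b\<close>, where \<open>g \<noteq> a\<close> if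
  V(a) - V(g) is nonempty, and otherwise \<open>b\<close> contains some \<open>c t\<close> not contained in \<open>g\<close>.
  So \<open>b \<subseteq> z\<close> for a listed \<open>z\<close> would give \<open>a \<subseteq> z\<close>, hence \<open>a = z\<close> by maximality,
  contradicting strictness.  Only inclusions between ideals enter the argument.\<close>

lemma KA_zero: "0 \<in> KA"
  by (simp add: KA_def)

lemma KA_add: "f \<in> KA \<Longrightarrow> g \<in> KA \<Longrightarrow> f + g \<in> KA"
  unfolding KA_def using keys_add[of f g] by blast

lemma KA_mult:
  fixes f g :: "('a,'x,'k::comm_ring_1) mpoly"
  assumes "f \<in> KA" "g \<in> KA"
  shows "f * g \<in> KA"
proof -
  have "snd m = 0" if m: "m \<in> Poly_Mapping.keys (f * g)" for m
  proof -
    obtain u v where "m = u + v" "u \<in> Poly_Mapping.keys f" "v \<in> Poly_Mapping.keys g"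
      using keys_mult[of f g] m by blast
    then show ?thesis using assms unfolding KA_def by auto
  qed
  then show ?thesis unfolding KA_def by blast
qed

lemma KA_sum: "(\<And>x. x \<in> A \<Longrightarrow> f x \<in> KA) \<Longrightarrow> sum f A \<in> KA"
  by (induction A rule: infinite_finite_induct) (simp_all add: KA_zero KA_add)

lemma is_ideal_A_KA: "is_ideal_A (KA :: ('a,'x,'k::comm_ring_1) mpoly set)"
  unfolding is_ideal_A_def using KA_zero KA_add KA_mult by blast

lemma lc_X_in_KA: "lc_X ord f \<in> KA"
  unfolding lc_X_def by (rule KA_sum) (simp add: KA_def)

lemma subset_ideal_gen: "S \<subseteq> ideal_gen S"
  unfolding ideal_gen_def by blast

lemma subset_ideal_gen_A: "S \<subseteq> ideal_gen_A S"
  unfolding ideal_gen_A_def by blast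

lemma ideal_gen_A_subset_KA:
  "S \<subseteq> (KA :: ('a,'x,'k::comm_ring_1) mpoly set) \<Longrightarrow> ideal_gen_A S \<subseteq> KA"
  unfolding ideal_gen_A_def using is_ideal_A_KA by blast

lemma subset_elimination_ideal: "a \<subseteq> KA \<Longrightarrow> a \<subseteq> ideal_gen (I \<union> a) \<inter> KA"
  using subset_ideal_gen[of "I \<union> a"] by blast

lemma zeroset_antimono: "S \<subseteq> T \<Longrightarrow> zeroset emb T \<subseteq> zeroset emb S"
  unfolding zeroset_def by blast

lemma minimalized_subset: "minimalized S \<subseteq> S"
  unfolding minimalized_def by blast

lemma minimalized_antichain:
  "x \<in> minimalized S \<Longrightarrow> y \<in> minimalized S \<Longrightarrow> x \<subseteq> y \<Longrightarrow> x = y"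
  unfolding minimalized_def by blast

lemma not_subset_if_strictly_above_maximal:
  assumes "\<forall>z\<in>hist. a \<subseteq> z \<longrightarrow> a = z" and "a \<subseteq> b" and "\<not> b \<subseteq> a"
  shows "\<forall>z\<in>hist. \<not> b \<subseteq> z"
  using assms by blast

text \<open>The pending list must be an antichain without repetitions, so that appending its
  head to the history does not swallow the remaining candidates.\<close>
definition cgs_invariant :: "('a,'x,'k::comm_ring_1) cgs_state \<Rightarrow> bool" where
  "cgs_invariant = (\<lambda>(todo, hist, pend).
     todo \<subseteq> hist \<and> (\<forall>a\<in>todo. a \<subseteq> KA) \<and> (\<forall>a\<in>todo. \<forall>z\<in>hist. a \<subseteq> z \<longrightarrow> a = z) \<and>
     (\<forall>b\<in>set pend. b \<subseteq> KA \<and> (\<forall>z\<in>hist. \<not> b \<subseteq> z)) \<and>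
     distinct pend \<and> (\<forall>x\<in>set pend. \<forall>y\<in>set pend. x \<subseteq> y \<longrightarrow> x = y))"

lemma cgs_invariant_init: "cgs_invariant cgs_init"
  unfolding cgs_invariant_def cgs_init_def by (simp add: KA_zero)

lemma cgs_step_preserves_invariant:
  assumes "cgs_step I ord emb s s'" and "cgs_invariant s"
  shows "cgs_invariant s'"
  using assms
proof (induction rule: cgs_step.induct)
  case (select_nonempty a todo G g hist)
  from select_nonempty(1,5) have a_KA: "a \<subseteq> KA" and a_maximal: "\<forall>z\<in>hist. a \<subseteq> z \<longrightarrow> a = z"
    by (simp_all add: cgs_invariant_def)
  from a_KA have "a \<subseteq> g"
    unfolding select_nonempty(3) by (rule subset_elimination_ideal)
  moreover have "\<not> g \<subseteq> a"
    using select_nonempty(4) zeroset_antimono[of g a emb] by blast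
  ultimately have "\<forall>z\<in>hist. \<not> g \<subseteq> z"
    by (rule not_subset_if_strictly_above_maximal[OF a_maximal])
  moreover have "g \<subseteq> KA"
    unfolding select_nonempty(3) by (rule Int_lower2)
  ultimately show ?case
    using select_nonempty(5) by (simp add: cgs_invariant_def) blast
next
  case (select_empty a todo G g M c bs hist)
  from select_empty(1,9) have a_KA: "a \<subseteq> KA" and a_maximal: "\<forall>z\<in>hist. a \<subseteq> z \<longrightarrow> a = z"
    by (simp_all add: cgs_invariant_def)
  from a_KA have a_g: "a \<subseteq> g"
    unfolding select_empty(3) by (rule subset_elimination_ideal)
  have g_KA: "g \<subseteq> KA"
    unfolding select_empty(3) by (rule Int_lower2)
  have candidate: "b \<subseteq> KA \<and> (\<forall>z\<in>hist. \<not> b \<subseteq> z)" if "b \<in> set bs" for b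
  proof -
    obtain t where b: "b = ideal_gen_A (c t \<union> g)" and c_g: "\<not> c t \<subseteq> g"
      using \<open>b \<in> set bs\<close> minimalized_subset unfolding select_empty(7) by blast
    have "c t \<subseteq> KA"
      unfolding select_empty(6) by (rule ideal_gen_A_subset_KA) (use lc_X_in_KA in blast)
    with g_KA have "b \<subseteq> KA"
      unfolding b by (simp add: ideal_gen_A_subset_KA)
    moreover have "a \<subseteq> b" "\<not> b \<subseteq> a"
      using subset_ideal_gen_A[of "c t \<union> g"] a_g c_g unfolding b by blast+
    then have "\<forall>z\<in>hist. \<not> b \<subseteq> z"
      by (rule not_subset_if_strictly_above_maximal[OF a_maximal])
    ultimately show ?thesis ..
  qed
  have "x = y" if "x \<in> set bs" "y \<in> set bs" "x \<subseteq> y" for x y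
    using that minimalized_antichain unfolding select_empty(7) by blast
  with candidate show ?case
    using select_empty(8,9) by (simp add: cgs_invariant_def) blast
next
  case (append todo b hist bs)
  from append(2) have "todo \<subseteq> hist" and todo_KA: "\<forall>a\<in>todo. a \<subseteq> KA"
    and todo_maximal: "\<forall>a\<in>todo. \<forall>z\<in>hist. a \<subseteq> z \<longrightarrow> a = z"
    and b_KA: "b \<subseteq> KA" and b_new: "\<forall>z\<in>hist. \<not> b \<subseteq> z"
    and bs_new: "\<forall>b'\<in>set bs. b' \<subseteq> KA \<and> (\<forall>z\<in>hist. \<not> b' \<subseteq> z)"
    and "b \<notin> set bs" "distinct bs"
    and antichain: "\<forall>x\<in>set (b # bs). \<forall>y\<in>set (b # bs). x \<subseteq> y \<longrightarrow> x = y"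
    by (simp_all add: cgs_invariant_def)
  have "\<forall>b'\<in>set bs. \<not> b' \<subseteq> b"
    using antichain \<open>b \<notin> set bs\<close> by auto
  moreover have "\<forall>a\<in>insert b todo. \<forall>z\<in>insert b hist. a \<subseteq> z \<longrightarrow> a = z"
    using todo_maximal b_new append(1) by auto
  ultimately show ?case
    using \<open>todo \<subseteq> hist\<close> todo_KA b_KA bs_new \<open>distinct bs\<close> antichain
    unfolding cgs_invariant_def by auto
next
  case (skip todo b hist bs)
  then show ?case
    by (simp add: cgs_invariant_def)
qed

lemma cgs_reachable_invariant:
  "(cgs_step I ord emb)\<^sup>*\<^sup>* cgs_init s \<Longrightarrow> cgs_invariant s"
  by (induction rule: rtranclp_induct) (auto intro: cgs_invariant_init cgs_step_preserves_invariant)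

theorem theorem4:
  fixes I :: "('a::finite, 'x::finite, 'k::field) mpoly set"
    and ord :: "('a,'x) pp \<Rightarrow> ('a,'x) pp \<Rightarrow> bool"
    and emb :: "'k \<Rightarrow> 'l::alg_closed_field"
    and todo hist :: "('a,'x,'k) mpoly set set"
    and b :: "('a,'x,'k) mpoly set" and bs :: "('a,'x,'k) mpoly set list"
  assumes "term_order ord" and "x_elim ord"
    and "is_ideal I"
    and "emb 0 = 0" and "emb 1 = 1"
    and "\<And>u v. emb (u + v) = emb u + emb v" and "\<And>u v. emb (u * v) = emb u * emb v"
    and "\<And>y. \<exists>p :: 'k poly. p \<noteq> 0 \<and> poly (map_poly emb p) y = 0"
    and "(cgs_step I ord emb)\<^sup>*\<^sup>* cgs_init (todo, hist, b # bs)"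
    and "\<not> (\<exists>z\<in>todo. z \<subseteq> b)"
  shows "(\<forall>z\<in>todo. \<not> z \<subseteq> b)
       \<and> (\<forall>z\<in>hist. \<not> b \<subseteq> z)
       \<and> (\<forall>z1\<in>insert b todo. \<forall>z2\<in>insert b todo. z1 \<subseteq> z2 \<longrightarrow> z1 = z2)"
proof -
  have "cgs_invariant (todo, hist, b # bs)"
    using assms(9) by (rule cgs_reachable_invariant)
  then have "todo \<subseteq> hist" and "\<forall>a\<in>todo. \<forall>z\<in>hist. a \<subseteq> z \<longrightarrow> a = z"
    and "\<forall>z\<in>hist. \<not> b \<subseteq> z"
    by (simp_all add: cgs_invariant_def)
  then show ?thesis
    using assms(10) by blast
qed

end
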